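(* Let $G$ be the path graph on $n$ vertices $v_1,\dots,v_n$ (with $v_t$ adjacent to $v_{t+1}$ for $1\le t<n$; the linear nearest-neighbor architecture). The quantum hashing circuit produced by the construction in the context on $n$ qubits has CNOT cost $3n-5$ for one application and $3n\ell-7\ell+2$ for $\ell$ applications with the path strategy.
   Context: Each vertex carries one physical qubit; two-qubit gates only act on qubits at adjacent vertices. The shortest walk visiting all vertices used is $P=(v_1,\dots,v_n)$. $CR_y(\xi)=\mathrm{diag}(I,R_y(\xi))$; SWAP exchanges two qubits. Single application along a walk $(x_1,\dots,x_k)$: target starts on $x_2$; $U=\emptyset$; apply $CR_y$ (control $x_1$, target $x_2$), add $x_1$ to $U$, $j=2$; loop: if $x_{j+1}\notin U$ apply $CR_y$ (control $x_{j+1}$, target $x_j$) and add $x_{j+1}$ to $U$; if $j=k-1$ stop; else if $x_{j+2}=x_j$ set $j\leftarrow j+2$, otherwise apply SWAP to $x_j,x_{j+1}$ and set $j\leftarrow j+1$; repeat. Path strategy for $\ell$ applications: applications alternately use $P$ and its reversal; the last $CR_y$ of one application and the first $CR_y$ of the next act on the same pair and are merged into one $CR_y$. CNOT cost: each $CR_y$ counts 2, each SWAP 3, a $CR_y$ immediately followed by a SWAP on the same two qubits 3 in total, single-qubit gates 0. *)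

theory Defs
  imports Main
begin

text \<open>CRy c t is a controlled R_y rotation with
control qubit at vertex c and target at vertex t (the rotation angle does not
influence the CNOT cost and is not recorded).\<close>

datatype gate = CRy nat nat | SWAP nat nat

fun is_CRy :: "gate \<Rightarrow> bool" where
  "is_CRy (CRy _ _) = True"
| "is_CRy (SWAP _ _) = False"

fun cnot_cost :: "gate list \<Rightarrow> nat" where
  "cnot_cost [] = 0"
| "cnot_cost (CRy c t # SWAP a b # gs) =
     (if {c, t} = {a, b} then 3 + cnot_cost gs else 2 + cnot_cost (SWAP a b # gs))"
| "cnot_cost (CRy c t # gs) = 2 + cnot_cost gs"
| "cnot_cost (SWAP a b # gs) = 3 + cnot_cost gs"

text \<open>Walk (x_1,...,x_k) is the list xs with x_j = xs ! (j-1).  The loop state is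
the set U and the 0-based index i = j - 1 of the current target position; the
last argument is fuel (the loop advances i in every round, so fuel length xs
suffices).  The stopping test j = k - 1 is written i + 2 >= length xs.\<close>

fun app_loop :: "nat list \<Rightarrow> nat set \<Rightarrow> nat \<Rightarrow> nat \<Rightarrow> gate list" where
  "app_loop xs U i 0 = []"
| "app_loop xs U i (Suc f) =
     (let g1 = (if xs ! (i+1) \<notin> U then [CRy (xs ! (i+1)) (xs ! i)] else []);
          U' = U \<union> {xs ! (i+1)}
      in if length xs \<le> i + 2 then g1
         else if xs ! (i+2) = xs ! i then g1 @ app_loop xs U' (i+2) f
         else g1 @ [SWAP (xs ! i) (xs ! (i+1))] @ app_loop xs U' (i+1) f)"

definition single_app :: "nat list \<Rightarrow> gate list" where
  "single_app xs = CRy (xs ! 0) (xs ! 1) # app_loop xs {xs ! 0} 1 (length xs)"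

definition merge_cat :: "gate list \<Rightarrow> gate list \<Rightarrow> gate list" where
  "merge_cat A B =
     (if A \<noteq> [] \<and> B \<noteq> [] \<and> is_CRy (last A) \<and> last A = hd B
      then butlast A @ B else A @ B)"

definition path_strategy :: "nat list \<Rightarrow> nat \<Rightarrow> gate list" where
  "path_strategy P l =
     foldl merge_cat []
       (map (\<lambda>i. single_app (if even i then P else rev P)) [0..<l])"

definition path_adj :: "nat \<Rightarrow> nat \<Rightarrow> nat \<Rightarrow> bool" where
  "path_adj n a b \<longleftrightarrow> a \<in> {1..n} \<and> b \<in> {1..n} \<and> (b = a + 1 \<or> a = b + 1)"

definition is_walk :: "(nat \<Rightarrow> nat \<Rightarrow> bool) \<Rightarrow> nat set \<Rightarrow> nat list \<Rightarrow> bool" where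
  "is_walk E V xs \<longleftrightarrow> xs \<noteq> [] \<and> set xs \<subseteq> V \<and>
     (\<forall>i. i + 1 < length xs \<longrightarrow> E (xs ! i) (xs ! (i+1)))"

definition covering_walk :: "(nat \<Rightarrow> nat \<Rightarrow> bool) \<Rightarrow> nat set \<Rightarrow> nat list \<Rightarrow> bool" where
  "covering_walk E V xs \<longleftrightarrow> is_walk E V xs \<and> set xs = V"

definition shortest_covering_walk :: "(nat \<Rightarrow> nat \<Rightarrow> bool) \<Rightarrow> nat set \<Rightarrow> nat list \<Rightarrow> bool" where
  "shortest_covering_walk E V xs \<longleftrightarrow> covering_walk E V xs \<and>
     (\<forall>ys. covering_walk E V ys \<longrightarrow> length xs \<le> length ys)"

end

theory Submission
  imports Defs
begin

(* A shortest walk covering the path graph visits each vertex once, so it is a list of distinct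
   vertices x_1, ..., x_n.  Along such a walk every control qubit is fresh and the walk never
   backtracks, hence one application is the ladder CRy(x_1,x_2), then the fused pairs
   CRy(x_(j+1),x_j) SWAP(x_j,x_(j+1)) for 2 <= j <= n-2, then CRy(x_n,x_(n-1)), of cost
   2 + 3(n-3) + 2 = 3n-5.  An application along P ends with the CRy that starts the
   application along rev P and vice versa, so each of the l-1 merges saves 2. *)

lemma nth_notin_set_take:
  assumes "distinct xs" "i < length xs"
  shows "xs ! i \<notin> set (take i xs)"
proof
  assume "xs ! i \<in> set (take i xs)"
  then obtain j where "j < i" "xs ! j = xs ! i"
    using assms(2) by (auto simp: in_set_conv_nth)
  with assms show False by (simp add: nth_eq_iff_index_eq)
qed

lemma successively_map_upt:
  assumes "\<And>i. R (f i) (f (Suc i))"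
  shows "successively R (map f [m..<n])"
proof (induction n)
  case (Suc n)
  then show ?case
    using assms[of "n - 1"] by (cases "m < n") (auto simp: successively_append_iff last_map)
qed simp

lemma shortest_covering_walk_distinct:
  assumes "shortest_covering_walk E V xs" and "covering_walk E V ys" and "distinct ys"
  shows "distinct xs \<and> length xs = card V"
proof -
  have "set xs = V" and "length xs \<le> length ys"
    using assms(1,2) by (auto simp: shortest_covering_walk_def covering_walk_def)
  moreover have "length ys = card V"
    using assms(2,3) distinct_card by (fastforce simp: covering_walk_def)
  ultimately show ?thesis
    using card_length[of xs] card_distinct[of xs] by simp
qed

lemma covering_walk_path_adj_upt:
  "1 \<le> n \<Longrightarrow> covering_walk (path_adj n) {1..n} [1..<n+1]"
  unfolding covering_walk_def is_walk_def path_adj_def by (auto simp del: upt_Suc)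

lemma shortest_covering_walk_path_adj:
  assumes "1 \<le> n" and "shortest_covering_walk (path_adj n) {1..n} P"
  shows "distinct P \<and> length P = n"
  using shortest_covering_walk_distinct[OF assms(2) covering_walk_path_adj_upt[OF assms(1)]]
  by simp

lemma cnot_cost_append:
  "B = [] \<or> is_CRy (hd B) \<Longrightarrow> cnot_cost (A @ B) = cnot_cost A + cnot_cost B"
proof (induction A rule: cnot_cost.induct)
  case ("3_1" c t)
  then show ?case by (cases B) (auto elim: is_CRy.elims)
qed auto

lemma cnot_cost_fused_pairs:
  "cnot_cost (concat (map (\<lambda>j. [CRy (a j) (b j), SWAP (b j) (a j)]) js) @ gs) =
     3 * length js + cnot_cost gs"
  by (induction js) (auto simp: insert_commute)

definition swap_ladder :: "nat list \<Rightarrow> nat \<Rightarrow> gate list" where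
  "swap_ladder xs i =
     concat (map (\<lambda>j. [CRy (xs ! (j+1)) (xs ! j), SWAP (xs ! j) (xs ! (j+1))]) [i..<length xs - 2])"

lemma app_loop_distinct:
  assumes "distinct xs" "i + 2 \<le> length xs" "U \<subseteq> set (take (i+1) xs)" "length xs \<le> i + 1 + f"
  shows "app_loop xs U i f = swap_ladder xs i @ [CRy (xs ! (length xs - 1)) (xs ! (length xs - 2))]"
  using assms(2-)
proof (induction f arbitrary: U i)
  case 0
  then show ?case by simp
next
  case (Suc f)
  have fresh: "xs ! (i+1) \<notin> U"
    using Suc.prems nth_notin_set_take[OF assms(1), of "i+1"] by auto
  show ?case
  proof (cases "length xs = i + 2")
    case True
    then show ?thesis using fresh by (simp add: swap_ladder_def)
  next
    case False
    have no_backtrack: "xs ! (i+2) \<noteq> xs ! i"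
      using assms(1) False Suc.prems(1) by (simp add: nth_eq_iff_index_eq)
    have "U \<union> {xs ! (i+1)} \<subseteq> set (take (i+2) xs)"
      using Suc.prems False by (auto simp: take_Suc_conv_app_nth)
    then have "app_loop xs (U \<union> {xs ! (i+1)}) (i+1) f =
        swap_ladder xs (i+1) @ [CRy (xs ! (length xs - 1)) (xs ! (length xs - 2))]"
      using Suc.IH[of "i+1"] Suc.prems False by simp
    moreover have "swap_ladder xs i =
        CRy (xs ! (i+1)) (xs ! i) # SWAP (xs ! i) (xs ! (i+1)) # swap_ladder xs (i+1)"
      using Suc.prems(1) False by (simp add: swap_ladder_def upt_conv_Cons)
    ultimately show ?thesis
      using fresh no_backtrack Suc.prems False by (simp add: Let_def)
  qed
qed

lemma single_app_distinct:
  assumes "distinct xs" "3 \<le> length xs"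
  shows "single_app xs =
    CRy (xs ! 0) (xs ! 1) # swap_ladder xs 1 @ [CRy (xs ! (length xs - 1)) (xs ! (length xs - 2))]"
proof -
  have "{xs ! 0} \<subseteq> set (take (1+1) xs)"
    using assms(2) by (cases xs) auto
  from app_loop_distinct[OF assms(1) _ this] show ?thesis
    using assms(2) by (simp add: single_app_def)
qed

lemma cnot_cost_single_app:
  assumes "distinct xs" "3 \<le> length xs"
  shows "cnot_cost (single_app xs) = 3 * length xs - 5"
proof -
  have "is_CRy (hd (swap_ladder xs 1 @ [CRy (xs ! (length xs - 1)) (xs ! (length xs - 2))]))"
    by (cases "1 < length xs - 2") (auto simp: swap_ladder_def upt_conv_Cons)
  then have "cnot_cost (single_app xs) =
      2 + cnot_cost (swap_ladder xs 1 @ [CRy (xs ! (length xs - 1)) (xs ! (length xs - 2))])"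
    using cnot_cost_append[of _ "[CRy (xs ! 0) (xs ! 1)]"] assms
    by (simp add: single_app_distinct)
  also have "\<dots> = 2 + 3 * (length xs - 3) + 2"
    unfolding swap_ladder_def by (simp add: cnot_cost_fused_pairs)
  finally show ?thesis using assms(2) by simp
qed

lemma last_single_app_rev:
  assumes "distinct xs" "3 \<le> length xs"
  shows "last (single_app (rev xs)) = hd (single_app xs)"
proof -
  have "last (single_app (rev xs)) = CRy (rev xs ! (length xs - 1)) (rev xs ! (length xs - 2))"
    using single_app_distinct[of "rev xs"] assms by simp
  then show ?thesis
    using assms(2) by (simp add: rev_nth single_app_def)
qed

lemma cnot_cost_merge_cat:
  assumes "A \<noteq> []" "B \<noteq> []" "is_CRy (hd B)" "last A = hd B"
  shows "cnot_cost (merge_cat A B) + 2 = cnot_cost A + cnot_cost B"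
proof -
  obtain c t where last_A: "last A = CRy c t"
    by (metis assms(3,4) is_CRy.elims(2))
  have "cnot_cost A = cnot_cost (butlast A @ [last A])"
    using assms(1) by simp
  also have "\<dots> = cnot_cost (butlast A) + 2"
    using cnot_cost_append[of "[last A]" "butlast A"] last_A by simp
  finally show ?thesis
    using cnot_cost_append[of B "butlast A"] assms by (simp add: merge_cat_def)
qed

lemma last_merge_cat: "B \<noteq> [] \<Longrightarrow> merge_cat A B \<noteq> [] \<and> last (merge_cat A B) = last B"
  by (simp add: merge_cat_def)

lemma cnot_cost_foldl_merge_cat:
  assumes "Bs \<noteq> []" "\<forall>B\<in>set Bs. B \<noteq> [] \<and> is_CRy (hd B)"
    and "successively (\<lambda>A B. last A = hd B) Bs"
  shows "cnot_cost (foldl merge_cat [] Bs) + 2 * (length Bs - 1) = (\<Sum>B\<leftarrow>Bs. cnot_cost B)"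
  using assms
proof (induction Bs rule: rev_induct)
  case (snoc B Bs)
  show ?case
  proof (cases "Bs = []")
    case True
    then show ?thesis by (simp add: merge_cat_def)
  next
    case False
    define F where "F = foldl merge_cat [] Bs"
    have "F \<noteq> [] \<and> last F = last (last Bs)"
      using False snoc.prems(2) unfolding F_def
      by (induction Bs rule: rev_induct) (auto simp: last_merge_cat)
    moreover have "last (last Bs) = hd B"
      using snoc.prems(3) False by (simp add: successively_append_iff)
    ultimately have "cnot_cost (merge_cat F B) + 2 = cnot_cost F + cnot_cost B"
      using snoc.prems(2) by (intro cnot_cost_merge_cat) auto
    moreover have "cnot_cost F + 2 * (length Bs - 1) = (\<Sum>B\<leftarrow>Bs. cnot_cost B)"
      using snoc False unfolding F_def by (simp add: successively_append_iff)
    moreover have "length Bs \<noteq> 0"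
      using False by simp
    ultimately show ?thesis
      unfolding F_def by (cases "length Bs") auto
  qed
qed simp

lemma cnot_cost_path_strategy:
  assumes "distinct P" "3 \<le> length P" "1 \<le> l"
  shows "cnot_cost (path_strategy P l) + 2 * (l - 1) = l * (3 * length P - 5)"
proof -
  define app where "app (i::nat) = single_app (if even i then P else rev P)" for i
  have blocks: "app i \<noteq> [] \<and> is_CRy (hd (app i))" for i
    by (simp add: app_def single_app_def)
  have "last (app i) = hd (app (Suc i))" for i
    using last_single_app_rev[of P] last_single_app_rev[of "rev P"] assms(1,2)
    by (simp add: app_def)
  then have chain: "successively (\<lambda>A B. last A = hd B) (map app [0..<l])"
    by (rule successively_map_upt)
  have "path_strategy P l = foldl merge_cat [] (map app [0..<l])"
    by (simp add: path_strategy_def app_def[abs_def])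
  moreover have "cnot_cost (foldl merge_cat [] (map app [0..<l])) + 2 * (l - 1) =
      (\<Sum>B\<leftarrow>map app [0..<l]. cnot_cost B)"
    using cnot_cost_foldl_merge_cat[OF _ _ chain] blocks assms(3) by simp
  moreover have "cnot_cost (app i) = 3 * length P - 5" for i
    using cnot_cost_single_app[of P] cnot_cost_single_app[of "rev P"] assms(1,2)
    by (simp add: app_def)
  ultimately show ?thesis
    by (simp add: sum_list_triv comp_def)
qed

theorem lemma5:
  fixes n :: nat and P :: "nat list"
  assumes "n \<ge> 3"
    and "shortest_covering_walk (path_adj n) {1..n} P"
  shows "int (cnot_cost (single_app P)) = 3 * int n - 5 \<and>
         (\<forall>l::nat. l \<ge> 1 \<longrightarrow>
            int (cnot_cost (path_strategy P l)) = 3 * int n * int l - 7 * int l + 2)"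
proof (intro conjI allI impI)
  have P: "distinct P" "length P = n"
    using shortest_covering_walk_path_adj[OF _ assms(2)] assms(1) by auto
  then show "int (cnot_cost (single_app P)) = 3 * int n - 5"
    using cnot_cost_single_app[of P] assms(1) by (simp add: of_nat_diff)
  fix l :: nat
  assume "l \<ge> 1"
  then have "int (cnot_cost (path_strategy P l)) + 2 * (int l - 1) = int l * (3 * int n - 5)"
    using arg_cong[OF cnot_cost_path_strategy[OF P(1) _ \<open>l \<ge> 1\<close>], of int] P assms(1)
    by (simp add: of_nat_diff)
  then show "int (cnot_cost (path_strategy P l)) = 3 * int n * int l - 7 * int l + 2"
    by (simp add: algebra_simps)
qed

end
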